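(* For all positive integers $n\geq 2$ and $t$, $|D_{n,t}|=\left\lceil\frac{n^t}{n+1}\right\rceil$.
   Context: For a positive integer $n$ let $[n]=\{1,\dots,n\}$; vertices of the Sierpiński graph $S(K_n,t)$ are words in $[n]^t$. Write $a^k$ for the word consisting of $k$ copies of the letter $a$. The sets $D_{n,t}\subseteq[n]^t$ are defined recursively: $D_{n,1}=\{1\}$, $D_{n,2}=\{11,21,\dots,n1\}$. For $t\geq 3$ and $\mathbf v=v_1\cdots v_{t-2}\in D_{n,t-2}$ put $E_1(\mathbf v)=\{v_1\cdots v_{t-2}\alpha\alpha:\alpha\in[n]\}$, $E_2(\mathbf v)=\{v_1\cdots v_{t-3}\alpha\beta v_{t-2}:\alpha,\beta\in[n]\setminus\{v_{t-2}\}\}$, and, if $\mathbf v$ is not a constant word, let $\ell$ be the largest index in $[t-3]$ with $v_\ell\neq v_{\ell+1}$ and put $E_3(\mathbf v)=\{v_1\cdots v_{\ell-1}v_{\ell+1}v_\ell^{\,t-\ell-2}\alpha v_\ell:\alpha\in[n]\setminus\{v_\ell\}\}$. If $t\geq 3$ is odd, $D_{n,t}=E_1(1^{t-2})\cup E_2(1^{t-2})\cup\bigcup_{\mathbf v\in D_{n,t-2}\setminus\{1^{t-2}\}}\big(E_1(\mathbf v)\cup E_2(\mathbf v)\cup E_3(\mathbf v)\big)$. If $t\geq 4$ is even, $D_{n,t}=\{1^{t-2}\alpha1:\alpha\in[n]\}\cup\bigcup_{\mathbf v\in D_{n,t-2}\setminus\{1^{t-2}\}}\big(E_1(\mathbf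 v)\cup E_2(\mathbf v)\cup E_3(\mathbf v)\big)$. (In this recursion $1^{t-2}\in D_{n,t-2}$ is the only constant word in $D_{n,t-2}$, so $E_3$ is applied only to non-constant words.) *)

theory Defs
  imports Complex_Main
begin

text \<open>Words in [n]^t are lists of naturals with letters in {1..n}; list position i (0-based)
  holds the letter v_(i+1) of the paper.\<close>

definition E1 :: "nat \<Rightarrow> nat list \<Rightarrow> nat list set" where
  "E1 n v = {v @ [a, a] | a. a \<in> {1..n}}"

definition E2 :: "nat \<Rightarrow> nat list \<Rightarrow> nat list set" where
  "E2 n v = {butlast v @ [a, b, last v] | a b. a \<in> {1..n} - {last v} \<and> b \<in> {1..n} - {last v}}"

definition ell :: "nat list \<Rightarrow> nat" where
  "ell v = Max {l \<in> {1..length v - 1}. v ! (l - 1) \<noteq> v ! l}"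

definition E3 :: "nat \<Rightarrow> nat list \<Rightarrow> nat list set" where
  "E3 n v = (let l = ell v in
     {take (l - 1) v @ [v ! l] @ replicate (length v - l) (v ! (l - 1)) @ [a, v ! (l - 1)]
       | a. a \<in> {1..n} - {v ! (l - 1)}})"

fun D :: "nat \<Rightarrow> nat \<Rightarrow> nat list set" where
  "D n 0 = {}"
| "D n (Suc 0) = {[1]}"
| "D n (Suc (Suc 0)) = {[a, 1] | a. a \<in> {1..n}}"
| "D n (Suc (Suc (Suc m))) =
     (let c = replicate (Suc m) 1;
          rest = (\<Union>v \<in> D n (Suc m) - {c}. E1 n v \<union> E2 n v \<union> E3 n v)
      in if odd (m + 3) then E1 n c \<union> E2 n c \<union> rest
         else {c @ [a, 1] | a. a \<in> {1..n}} \<union> rest)"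

end

theory Submission
  imports Defs
begin

text \<open>Every non-constant word v of \<open>D n t\<close> has the n^2 children
  \<open>E1 n v \<union> E2 n v \<union> E3 n v\<close> in \<open>D n (t + 2)\<close>, and children of distinct
  parents are distinct: the last three letters of a child tell which of E1, E2, E3 produced
  it, and the parent can then be recovered (for E3 because the parent ends in a maximal run
  x y...y, which the child turns into y x...x). The constant word 1...1 contributes
  n^2 - n + 1 words for odd t and n for even t. Hence
  |D n (t + 2)| = n^2 (|D n t| - 1) + (n^2 - n + 1 or n), which by induction gives
  (n + 1) |D n t| = n^t + 1 for odd t and n^t + n for even t; this is the ceiling formula.\<close>

definition constant_word :: "'a list \<Rightarrow> bool" where
  "constant_word v \<longleftrightarrow> (\<exists>x. set v \<subseteq> {x})"

definition words :: "nat \<Rightarrow> nat \<Rightarrow> nat list set" where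
  "words n t = {w. length w = t \<and> set w \<subseteq> {1..n}}"

definition children :: "nat \<Rightarrow> nat list \<Rightarrow> nat list set" where
  "children n v = E1 n v \<union> E2 n v \<union> E3 n v"

definition ones_children :: "nat \<Rightarrow> nat \<Rightarrow> nat list set" where
  "ones_children n t = (let c = replicate t 1 in
     if odd t then E1 n c \<union> E2 n c else {c @ [a, 1] | a. a \<in> {1..n}})"

lemma finite_words: "finite (words n t)"
  unfolding words_def using finite_lists_length_eq[of "{1..n}" t] by (simp add: conj_commute)

lemma butlast_replicate: "butlast (replicate k x) = replicate (k - 1) x"
  by (cases k) (auto simp flip: replicate_append_same)

lemma replicate_append_Cons_eq_iff:
  assumes "y \<noteq> x" "y' \<noteq> x"
  shows "replicate k x @ y # xs = replicate k' x @ y' # ys \<longleftrightarrow> k = k' \<and> y = y' \<and> xs = ys"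
proof (induction k arbitrary: k')
  case 0
  then show ?case using assms by (cases k') auto
next
  case (Suc k)
  then show ?case using assms by (cases k') auto
qed

lemma not_constant_word_last_run:
  assumes "\<not> constant_word v"
  obtains P x y k where "v = P @ [x] @ replicate (Suc k) y" "x \<noteq> y"
proof -
  define y where "y = last v"
  define s where "s = takeWhile (\<lambda>a. a = y) (rev v)"
  define r where "r = dropWhile (\<lambda>a. a = y) (rev v)"
  have split: "rev v = s @ r" unfolding s_def r_def by simp
  have "v \<noteq> []" using assms unfolding constant_word_def by auto
  then have "s \<noteq> []" unfolding s_def y_def by (cases "rev v") (auto simp: last_rev[symmetric])
  then obtain k where k: "length s = Suc k" by (cases s) auto
  have "\<forall>a\<in>set s. a = y" unfolding s_def by (auto dest: set_takeWhileD)
  from replicate_length_same[OF this] have s: "s = replicate (Suc k) y" using k by simp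
  have "r \<noteq> []"
  proof
    assume "r = []"
    then have "set v \<subseteq> {y}" using arg_cong[OF split, of set] s by auto
    then show False using assms unfolding constant_word_def by blast
  qed
  then obtain x P' where r: "r = x # P'" by (cases r) auto
  then have "x \<noteq> y" using hd_dropWhile[of "\<lambda>a. a = y" "rev v"] unfolding r_def by simp
  moreover have "v = rev P' @ [x] @ replicate (Suc k) y"
    using arg_cong[OF split, of rev] unfolding s r by (simp add: replicate_append_same)
  ultimately show ?thesis using that by blast
qed

lemma ell_append_replicate:
  assumes "x \<noteq> y"
  shows "ell (P @ [x] @ replicate (Suc k) y) = Suc (length P)"
proof -
  let ?v = "P @ [x] @ replicate (Suc k) y"
  have run: "?v ! i = y" if "length P < i" "i < length ?v" for i
    using that by (auto simp: nth_append nth_Cons')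
  show ?thesis
    unfolding ell_def
  proof (rule Max_eqI)
    fix l assume "l \<in> {l \<in> {1..length ?v - 1}. ?v ! (l - 1) \<noteq> ?v ! l}"
    then have l: "l \<le> length ?v - 1" "?v ! (l - 1) \<noteq> ?v ! l" by auto
    show "l \<le> Suc (length P)"
    proof (rule ccontr)
      assume "\<not> l \<le> Suc (length P)"
      then have "length P < l - 1" "l < length ?v" using l(1) by auto
      then show False using l(2) run[of l] run[of "l - 1"] by simp
    qed
  qed (use assms in \<open>auto simp: nth_append\<close>)
qed

lemma E3_append_replicate:
  assumes "x \<noteq> y"
  shows "E3 n (P @ [x] @ replicate (Suc k) y) = {P @ [y] @ replicate (Suc k) x @ [a, x] | a. a \<in> {1..n} - {x}}"
  unfolding E3_def Let_def ell_append_replicate[OF assms] by (simp add: nth_append)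

lemma E1_eq_image: "E1 n v = (\<lambda>a. v @ [a, a]) ` {1..n}"
  unfolding E1_def by auto

lemma E2_eq_image:
  "E2 n v = (\<lambda>(a, b). butlast v @ [a, b, last v]) ` (({1..n} - {last v}) \<times> ({1..n} - {last v}))"
  unfolding E2_def by auto

lemma E3_eq_image:
  assumes "x \<noteq> y"
  shows "E3 n (P @ [x] @ replicate (Suc k) y) = (\<lambda>a. P @ [y] @ replicate (Suc k) x @ [a, x]) ` ({1..n} - {x})"
  unfolding E3_append_replicate[OF assms] by auto

lemma finite_E1: "finite (E1 n v)"
  unfolding E1_eq_image by simp

lemma finite_E2: "finite (E2 n v)"
  unfolding E2_eq_image by simp

lemma finite_E3: "finite (E3 n v)"
  unfolding E3_def Let_def by simp

lemma card_E1: "card (E1 n v) = n"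
  unfolding E1_eq_image by (simp add: card_image inj_on_def)

lemma card_E2: "last v \<in> {1..n} \<Longrightarrow> card (E2 n v) = (n - 1)\<^sup>2"
  unfolding E2_eq_image by (simp add: card_image inj_on_def card_cartesian_product power2_eq_square)

lemma card_E3:
  assumes "\<not> constant_word v" "set v \<subseteq> {1..n}"
  shows "card (E3 n v) = n - 1"
proof -
  obtain P x y k where v: "v = P @ [x] @ replicate (Suc k) y" "x \<noteq> y"
    using not_constant_word_last_run[OF assms(1)] .
  then have "x \<in> {1..n}" using assms(2) by auto
  then show ?thesis unfolding v(1) E3_eq_image[OF v(2)] by (simp add: card_image inj_on_def)
qed

lemma E1_E1_disjoint: "v \<noteq> v' \<Longrightarrow> E1 n v \<inter> E1 n v' = {}"
  unfolding E1_eq_image by auto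

text \<open>Reversing a word moves its trailing letters to the head, where simp compares them.\<close>

lemma E2_E2_disjoint:
  assumes "v \<noteq> v'" "v \<noteq> []" "v' \<noteq> []"
  shows "E2 n v \<inter> E2 n v' = {}"
proof -
  have "butlast v \<noteq> butlast v' \<or> last v \<noteq> last v'"
    using assms by (metis append_butlast_last_id)
  then show ?thesis unfolding E2_eq_image by (auto dest: arg_cong[where f = rev])
qed

lemma E3_E3_disjoint:
  assumes "v \<noteq> v'" "\<not> constant_word v" "\<not> constant_word v'"
  shows "E3 n v \<inter> E3 n v' = {}"
proof -
  obtain P x y k where v: "v = P @ [x] @ replicate (Suc k) y" "x \<noteq> y"
    using not_constant_word_last_run[OF assms(2)] .
  obtain P' x' y' k' where v': "v' = P' @ [x'] @ replicate (Suc k') y'" "x' \<noteq> y'"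
    using not_constant_word_last_run[OF assms(3)] .
  have "P @ [y] @ replicate (Suc k) x @ [a, x] \<noteq> P' @ [y'] @ replicate (Suc k') x' @ [a', x']" for a a'
    using assms(1) v v' replicate_append_Cons_eq_iff[of y x y' k "rev P" k' "rev P'"]
    by (subst rev_is_rev_conv[symmetric]) (auto simp: replicate_app_Cons_same)
  then show ?thesis unfolding v v' E3_eq_image[OF v(2)] E3_eq_image[OF v'(2)] by auto
qed

lemma E1_E2_disjoint: "E1 n v \<inter> E2 n v' = {}"
  unfolding E1_eq_image E2_eq_image by (auto dest: arg_cong[where f = rev])

lemma E1_E3_disjoint:
  assumes "\<not> constant_word v'"
  shows "E1 n v \<inter> E3 n v' = {}"
proof -
  obtain P x y k where v': "v' = P @ [x] @ replicate (Suc k) y" "x \<noteq> y"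
    using not_constant_word_last_run[OF assms] .
  then show ?thesis unfolding E1_eq_image v' E3_eq_image[OF v'(2)] by (auto dest: arg_cong[where f = rev])
qed

lemma E2_E3_disjoint:
  assumes "\<not> constant_word v'"
  shows "E2 n v \<inter> E3 n v' = {}"
proof -
  obtain P x y k where v': "v' = P @ [x] @ replicate (Suc k) y" "x \<noteq> y"
    using not_constant_word_last_run[OF assms] .
  have "butlast v @ [a, b, last v] \<noteq> P @ [y] @ replicate (Suc k) x @ [c, x]" if "a \<noteq> last v" for a b c
    using that by (subst rev_is_rev_conv[symmetric]) (simp add: replicate_app_Cons_same)
  then show ?thesis unfolding E2_eq_image v' E3_eq_image[OF v'(2)] by auto
qed

lemma children_disjoint:
  assumes "v \<noteq> v'" "\<not> constant_word v" "\<not> constant_word v'"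
  shows "children n v \<inter> children n v' = {}"
proof -
  have "v \<noteq> []" "v' \<noteq> []" using assms(2,3) unfolding constant_word_def by auto
  then show ?thesis
    using E1_E1_disjoint[OF assms(1)] E2_E2_disjoint[OF assms(1)] E3_E3_disjoint[OF assms]
      E1_E2_disjoint[of n v v'] E1_E2_disjoint[of n v' v]
      E1_E3_disjoint[OF assms(2), of n v'] E1_E3_disjoint[OF assms(3), of n v]
      E2_E3_disjoint[OF assms(2), of n v'] E2_E3_disjoint[OF assms(3), of n v]
    unfolding children_def by blast
qed

lemma card_children:
  assumes "\<not> constant_word v" "set v \<subseteq> {1..n}"
  shows "card (children n v) = n\<^sup>2"
proof -
  have "v \<noteq> []" using assms(1) unfolding constant_word_def by auto
  then have last: "last v \<in> {1..n}" using assms(2) last_in_set by blast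
  then have "n \<ge> 1" by simp
  have "card (children n v) = card (E1 n v \<union> E2 n v) + card (E3 n v)"
    unfolding children_def using E1_E3_disjoint[OF assms(1)] E2_E3_disjoint[OF assms(1)]
    by (intro card_Un_disjoint) (blast intro: finite_E1 finite_E2 finite_E3)+
  also have "\<dots> = n + (n - 1)\<^sup>2 + (n - 1)"
    using E1_E2_disjoint card_E1 card_E2[OF last] card_E3[OF assms]
    by (subst card_Un_disjoint) (simp_all add: finite_E1 finite_E2)
  also have "\<dots> = n\<^sup>2" using \<open>n \<ge> 1\<close> by (cases n) (auto simp: power2_eq_square)
  finally show ?thesis .
qed

lemma children_subset_words:
  assumes "v \<in> words n t" "\<not> constant_word v"
  shows "children n v \<subseteq> {w \<in> words n (t + 2). \<not> constant_word w}"
proof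
  fix w assume w: "w \<in> children n v"
  obtain P x y k where v: "v = P @ [x] @ replicate (Suc k) y" "x \<noteq> y"
    using not_constant_word_last_run[OF assms(2)] .
  have "v \<noteq> []" using v(1) by simp
  have letters: "set v \<subseteq> {1..n}" and len: "length v = t" using assms(1) unfolding words_def by auto
  from w consider (E1) a where "a \<in> {1..n}" "w = v @ [a, a]"
    | (E2) a b where "a \<in> {1..n} - {last v}" "b \<in> {1..n} - {last v}" "w = butlast v @ [a, b, last v]"
    | (E3) a where "a \<in> {1..n} - {x}" "w = P @ [y] @ replicate (Suc k) x @ [a, x]"
    unfolding children_def E1_def E2_def v(1) E3_append_replicate[OF v(2)] by blast
  then show "w \<in> {w \<in> words n (t + 2). \<not> constant_word w}"
  proof cases
    case E1
    then show ?thesis using assms letters len unfolding words_def constant_word_def by auto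
  next
    case E2
    have "set (butlast v) \<subseteq> {1..n}" "last v \<in> {1..n}"
      using letters last_in_set[OF \<open>v \<noteq> []\<close>] by (auto dest: in_set_butlastD)
    then show ?thesis
      using E2 letters len \<open>v \<noteq> []\<close> unfolding words_def constant_word_def by auto
  next
    case E3
    then show ?thesis using letters len unfolding v(1) words_def constant_word_def by auto
  qed
qed

lemma one_mem_ones_children: "t \<ge> 1 \<Longrightarrow> w \<in> ones_children n t \<Longrightarrow> 1 \<in> set w"
  by (cases t) (auto simp: ones_children_def Let_def E1_def E2_def split: if_splits)

lemma ones_children_subset_words:
  assumes "n \<ge> 1" "t \<ge> 1"
  shows "ones_children n t \<subseteq> words n (t + 2)"
  using assms unfolding ones_children_def Let_def E1_def E2_def words_def
  by (auto simp: butlast_replicate)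

lemma ones_children_constant:
  assumes "n \<ge> 1" "t \<ge> 1"
  shows "{w \<in> ones_children n t. constant_word w} = {replicate (t + 2) 1}"
proof -
  have ones: "replicate (t + 2) 1 = replicate t 1 @ [1, 1]"
    by (simp add: replicate_app_Cons_same)
  have "replicate (t + 2) 1 \<in> ones_children n t"
    using \<open>n \<ge> 1\<close> unfolding ones ones_children_def Let_def E1_def by force
  moreover have "w = replicate (t + 2) 1" if "w \<in> ones_children n t" "constant_word w" for w
  proof -
    have "set w \<subseteq> {1}" "length w = t + 2"
      using that one_mem_ones_children[OF assms(2) that(1)] ones_children_subset_words[OF assms]
      unfolding constant_word_def words_def by auto
    then show ?thesis by (metis replicate_length_same singletonD subsetD)
  qed
  ultimately show ?thesis unfolding constant_word_def by auto
qed

lemma ones_children_children_disjoint: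
  assumes "t \<ge> 1" "\<not> constant_word v"
  shows "ones_children n t \<inter> children n v = {}"
proof -
  let ?c = "replicate t (1::nat)"
  have "?c \<noteq> []" "?c \<noteq> v" "v \<noteq> []" using assms unfolding constant_word_def by auto
  show ?thesis
  proof (cases "odd t")
    case True
    then show ?thesis
      using E1_E1_disjoint[OF \<open>?c \<noteq> v\<close>] E2_E2_disjoint[OF \<open>?c \<noteq> v\<close> \<open>?c \<noteq> []\<close> \<open>v \<noteq> []\<close>]
        E1_E2_disjoint[of n ?c v] E1_E2_disjoint[of n v ?c]
        E1_E3_disjoint[OF assms(2), of n ?c] E2_E3_disjoint[OF assms(2), of n ?c]
      unfolding ones_children_def children_def Let_def by auto
  next
    case False
    obtain P x y k where v: "v = P @ [x] @ replicate (Suc k) y" "x \<noteq> y"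
      using not_constant_word_last_run[OF assms(2)] .
    have E3v: "E3 n v = {P @ [y] @ replicate (Suc k) x @ [b, x] | b. b \<in> {1..n} - {x}}"
      unfolding v(1) by (rule E3_append_replicate[OF v(2)])
    have "?c @ [a, 1] \<notin> children n v" for a
      using \<open>?c \<noteq> v\<close> \<open>v \<noteq> []\<close> v(2) assms(1)
      unfolding children_def E1_def E2_def E3v
      by (auto dest: arg_cong[where f = rev] arg_cong[where f = set])
    with False show ?thesis unfolding ones_children_def by auto
  qed
qed

lemma card_ones_children:
  assumes "n \<ge> 1" "t \<ge> 1"
  shows "card (ones_children n t) = (if odd t then n + (n - 1)\<^sup>2 else n)"
proof (cases "odd t")
  case True
  let ?c = "replicate t (1::nat)"
  have "card (ones_children n t) = card (E1 n ?c) + card (E2 n ?c)"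
    using True E1_E2_disjoint unfolding ones_children_def Let_def
    by (simp add: card_Un_disjoint finite_E1 finite_E2)
  then show ?thesis using True assms card_E1 card_E2[of ?c n] by simp
next
  case False
  have "{replicate t 1 @ [a, 1] | a. a \<in> {1..n}} = (\<lambda>a. replicate t 1 @ [a, 1]) ` {1..n}" by auto
  then show ?thesis using False unfolding ones_children_def Let_def by (simp add: card_image inj_on_def)
qed

lemma D_Suc_Suc:
  assumes "t \<ge> 1"
  shows "D n (Suc (Suc t)) = ones_children n t \<union> (\<Union>v \<in> D n t - {replicate t 1}. children n v)"
  using assms by (cases t) (simp_all add: ones_children_def children_def Let_def)

lemma D_invariant:
  assumes "n \<ge> 1" "t \<ge> 1"
  shows "D n t \<subseteq> words n t \<and> {w \<in> D n t. constant_word w} = {replicate t 1}"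
  using assms
proof (induction n t rule: D.induct)
  case (2 n)
  then show ?case unfolding words_def constant_word_def by auto
next
  case (3 n)
  then show ?case unfolding words_def constant_word_def by (auto simp: numeral_2_eq_2)
next
  case (4 n m)
  let ?c = "replicate (Suc m) (1::nat)"
  have IH: "D n (Suc m) \<subseteq> words n (Suc m)" "{w \<in> D n (Suc m). constant_word w} = {?c}"
    using 4 by auto
  have "children n v \<subseteq> {w \<in> words n (Suc m + 2). \<not> constant_word w}" if "v \<in> D n (Suc m) - {?c}" for v
    using that IH by (intro children_subset_words) auto
  then show ?case
    using D_Suc_Suc[of "Suc m" n] ones_children_subset_words[OF \<open>n \<ge> 1\<close>, of "Suc m"]
      ones_children_constant[OF \<open>n \<ge> 1\<close>, of "Suc m"]
    by auto
qed simp

lemma card_D_Suc_Suc: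
  assumes "n \<ge> 1" "t \<ge> 1"
  shows "card (D n (Suc (Suc t))) = card (ones_children n t) + (card (D n t) - 1) * n\<^sup>2"
proof -
  let ?c = "replicate t (1::nat)"
  let ?V = "D n t - {?c}"
  have invariant: "D n t \<subseteq> words n t" "{w \<in> D n t. constant_word w} = {?c}"
    using D_invariant[OF assms] by auto
  then have c: "?c \<in> D n t" by blast
  have V: "v \<in> words n t" "\<not> constant_word v" if "v \<in> ?V" for v
    using that invariant by auto
  have finite_D: "finite (D n t)" using invariant(1) finite_words by (rule finite_subset)
  have finite_children: "finite (children n v)" if "v \<in> ?V" for v
  proof (rule finite_subset)
    show "children n v \<subseteq> {w \<in> words n (t + 2). \<not> constant_word w}"
      using V[OF that] by (rule children_subset_words)
    show "finite {w \<in> words n (t + 2). \<not> constant_word w}" using finite_words by simp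
  qed
  have "card (\<Union>v \<in> ?V. children n v) = (\<Sum>v \<in> ?V. card (children n v))"
    using finite_D finite_children children_disjoint V(2) by (intro card_UN_disjoint) auto
  also have "\<dots> = (\<Sum>v \<in> ?V. n\<^sup>2)"
    using V card_children unfolding words_def by (intro sum.cong) auto
  also have "\<dots> = (card (D n t) - 1) * n\<^sup>2" using finite_D c by simp
  finally have card_rest: "card (\<Union>v \<in> ?V. children n v) = (card (D n t) - 1) * n\<^sup>2" .
  have "finite (ones_children n t)"
    using ones_children_subset_words[OF assms] finite_words by (rule finite_subset)
  moreover have "finite (\<Union>v \<in> ?V. children n v)" using finite_D finite_children by simp
  moreover have "ones_children n t \<inter> (\<Union>v \<in> ?V. children n v) = {}"
    using ones_children_children_disjoint[OF assms(2)] V(2) by blast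
  ultimately show ?thesis
    unfolding D_Suc_Suc[OF assms(2)] card_rest[symmetric] by (rule card_Un_disjoint)
qed

lemma card_D:
  assumes "n \<ge> 1" "t \<ge> 1"
  shows "int (n + 1) * int (card (D n t)) = int n ^ t + (if odd t then 1 else int n)"
  using assms
proof (induction n t rule: D.induct)
  case (3 n)
  have "D n 2 = (\<lambda>a. [a, 1]) ` {1..n}" by (auto simp: numeral_2_eq_2)
  then have "card (D n 2) = n" by (simp add: card_image inj_on_def)
  then show ?case by (simp add: numeral_2_eq_2 algebra_simps power2_eq_square)
next
  case (4 n m)
  have "replicate (Suc m) 1 \<in> D n (Suc m)" "finite (D n (Suc m))"
    using D_invariant[OF \<open>n \<ge> 1\<close>, of "Suc m"] finite_words[of n "Suc m"] finite_subset by auto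
  then have "card (D n (Suc m)) \<ge> 1" by (auto simp: Suc_le_eq card_gt_0_iff)
  define C where "C = int (card (D n (Suc m)))"
  define C' where "C' = int (card (D n (Suc (Suc (Suc m)))))"
  have IH: "int (n + 1) * C = int n ^ Suc m + (if odd m then int n else 1)"
    using 4 unfolding C_def by simp
  define B where "B = (if odd m then int n else int n + (int n - 1)\<^sup>2)"
  have step: "C' = B + (C - 1) * int n ^ 2"
    using card_D_Suc_Suc[OF \<open>n \<ge> 1\<close>, of "Suc m"] card_ones_children[OF \<open>n \<ge> 1\<close>, of "Suc m"]
      \<open>card (D n (Suc m)) \<ge> 1\<close> \<open>n \<ge> 1\<close>
    unfolding B_def C_def C'_def by (simp add: of_nat_diff)
  have "int (n + 1) * C' = int n ^ 2 * (int (n + 1) * C) + int (n + 1) * (B - int n ^ 2)"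
    unfolding step by (simp add: algebra_simps)
  then show ?case
    unfolding C'_def[symmetric] IH B_def by (cases "odd m") (simp_all add: algebra_simps power2_eq_square)
qed auto

lemma ceiling_divide_eq:
  fixes c e N d :: int
  assumes "d * c = N + e" "0 \<le> e" "e < d"
  shows "\<lceil>real_of_int N / real_of_int d\<rceil> = c"
proof (rule ceiling_unique)
  have d: "real_of_int d > 0" using assms by simp
  have "real_of_int N / real_of_int d = real_of_int c - real_of_int e / real_of_int d"
    using arg_cong[OF assms(1), of real_of_int] d by (simp add: field_simps)
  moreover have "0 \<le> real_of_int e / real_of_int d" "real_of_int e / real_of_int d < 1"
    using assms d by auto
  ultimately show "real_of_int c - 1 < real_of_int N / real_of_int d" "real_of_int N / real_of_int d \<le> real_of_int c"
    by auto
qed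

theorem lemma2p4:
  fixes n t :: nat
  assumes "n \<ge> 2" and "t \<ge> 1"
  shows "int (card (D n t)) = \<lceil>real n ^ t / real (n + 1)\<rceil>"
proof -
  have "int (n + 1) * int (card (D n t)) = int n ^ t + (if odd t then 1 else int n)"
    using card_D assms by simp
  from ceiling_divide_eq[OF this] show ?thesis using assms by simp
qed

end
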